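(* Let $t\ge 3$ and $\Delta\ge 4$ be integers, and let $P_t$ be a path with vertices $p_1,\dots,p_t$. Form an intermediate tree by appending onto every vertex $p_j$ of the path $\Delta-2$ copies of the $\Delta$-star (each identified by one of its leaves with $p_j$). Then, for each $j$, subdivide a single edge between $p_j$ and an adjacent support vertex (center of one of the stars appended at $p_j$). Let $T_{t,\Delta}$ be the resulting tree and $n$ its order. Then \[\gamma^{\rm ID}(T_{t,\Delta}) = \left(\frac{\Delta-1+\frac{1}{\Delta-2}}{\Delta+\frac{2}{\Delta-2}}\right)n > \left(\frac{\Delta-1}{\Delta}\right)n-\frac{n}{\Delta^2}.\]
   Context: An identifying code of a graph $G$ is a set $C\subseteq V(G)$ such that every vertex $v$ has $N[v]\cap C\neq\emptyset$ and for all distinct $u,v$, $N[u]\cap C \ne N[v]\cap C$, where $N[v]$ is the closed neighborhood; $\gamma^{\rm ID}(G)$ is its minimum size. A $\Delta$-star is $K_{1,\Delta}$. *)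

theory Defs
  imports Main "HOL.Real"
begin

definition closed_nbhd :: "'a set \<Rightarrow> ('a \<Rightarrow> 'a \<Rightarrow> bool) \<Rightarrow> 'a \<Rightarrow> 'a set" where
  "closed_nbhd V E v = {u \<in> V. u = v \<or> E v u}"

definition is_identifying_code :: "'a set \<Rightarrow> ('a \<Rightarrow> 'a \<Rightarrow> bool) \<Rightarrow> 'a set \<Rightarrow> bool" where
  "is_identifying_code V E C \<longleftrightarrow>
     C \<subseteq> V \<and>
     (\<forall>v\<in>V. closed_nbhd V E v \<inter> C \<noteq> {}) \<and>
     (\<forall>u\<in>V. \<forall>v\<in>V. u \<noteq> v \<longrightarrow> closed_nbhd V E u \<inter> C \<noteq> closed_nbhd V E v \<inter> C)"

definition id_code_number :: "'a set \<Rightarrow> ('a \<Rightarrow> 'a \<Rightarrow> bool) \<Rightarrow> nat" where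
  "id_code_number V E = (LEAST k. \<exists>C. is_identifying_code V E C \<and> card C = k)"

text \<open>Vertices of the tree T_{t,Delta}:
  P j      -- path vertex p_{j+1} (j < t);
  C j k    -- centre of the k-th star appended at P j (k < Delta-2);
  L j k l  -- the Delta-1 leaves of that star other than P j (l < Delta-1);
  S j      -- the subdivision vertex on the edge P j -- C j 0.\<close>

datatype tvert = P nat | C nat nat | L nat nat nat | S nat

definition tverts :: "nat \<Rightarrow> nat \<Rightarrow> tvert set" where
  "tverts t d =
     {P j | j. j < t} \<union> {S j | j. j < t} \<union>
     {C j k | j k. j < t \<and> k < d - 2} \<union>
     {L j k l | j k l. j < t \<and> k < d - 2 \<and> l < d - 1}"

definition tarc :: "nat \<Rightarrow> nat \<Rightarrow> tvert \<Rightarrow> tvert \<Rightarrow> bool" where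
  "tarc t d x y \<longleftrightarrow> x \<in> tverts t d \<and> y \<in> tverts t d \<and>
     (\<exists>j. (x = P j \<and> y = P (Suc j)) \<or>
          (\<exists>k. 1 \<le> k \<and> x = P j \<and> y = C j k) \<or>
          (x = P j \<and> y = S j) \<or>
          (x = S j \<and> y = C j 0) \<or>
          (\<exists>k l. x = C j k \<and> y = L j k l))"

definition tadj :: "nat \<Rightarrow> nat \<Rightarrow> tvert \<Rightarrow> tvert \<Rightarrow> bool" where
  "tadj t d x y \<longleftrightarrow> tarc t d x y \<or> tarc t d y x"

end

theory Submission
  imports Defs
begin

text \<open>Group the vertices into blocks: a path vertex \<open>p\<^sub>j\<close>, its subdivision vertex \<open>s\<^sub>j\<close>
  and its \<open>\<Delta> - 2\<close> stars, \<open>2 + (\<Delta> - 2)\<Delta>\<close> vertices in all. Leaves of a common star are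
  separated only by themselves, so an identifying code contains at least \<open>\<Delta> - 1\<close> vertices of
  every star. If it moreover avoids \<open>p\<^sub>j\<close> and \<open>s\<^sub>j\<close>, then \<open>s\<^sub>j\<close> is seen only through the centre
  of the star on the subdivided edge, and no leaf of that star may be missing either. So every
  block carries at least \<open>1 + (\<Delta> - 2)(\<Delta> - 1)\<close> code vertices, and all vertices except the path
  vertices and one leaf per star form an identifying code of exactly that size. The ratio of
  the statement equals \<open>(1 + (\<Delta> - 2)(\<Delta> - 1)) / (2 + (\<Delta> - 2)\<Delta>)\<close>, and the strict inequality
  amounts to the polynomial identity \<open>(\<Delta>\<^sup>2 - 3\<Delta> + 3)\<Delta>\<^sup>2 = (\<Delta>\<^sup>2 - \<Delta> - 1)(\<Delta>\<^sup>2 - 2\<Delta> + 2) + 2\<close>.\<close>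

section \<open>Identifying codes of arbitrary graphs\<close>

lemma is_identifying_codeD:
  assumes "is_identifying_code V E X"
  shows "X \<subseteq> V"
    and "v \<in> V \<Longrightarrow> closed_nbhd V E v \<inter> X \<noteq> {}"
    and "u \<in> V \<Longrightarrow> v \<in> V \<Longrightarrow> u \<noteq> v \<Longrightarrow> closed_nbhd V E u \<inter> X \<noteq> closed_nbhd V E v \<inter> X"
  using assms unfolding is_identifying_code_def by blast+

lemma mem_vertices_if_closed_nbhd_eq: "closed_nbhd V E v = insert v A \<Longrightarrow> v \<in> V"
  unfolding closed_nbhd_def by blast

lemma id_code_number_eqI:
  assumes "is_identifying_code V E X" "card X = k"
    and "\<And>Y. is_identifying_code V E Y \<Longrightarrow> k \<le> card Y"
  shows "id_code_number V E = k"
  unfolding id_code_number_def using assms by (intro Least_equality) blast+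

lemma card_pendant_leaves_le_identifying_code:
  assumes X: "is_identifying_code V E X" and "finite Ls" "c \<notin> Ls"
    and leaf: "\<And>l. l \<in> Ls \<Longrightarrow> closed_nbhd V E l = {l, c}"
  shows "card Ls \<le> card (X \<inter> insert c Ls)"
proof (cases "c \<in> X")
  case False
  have "l \<in> X" if "l \<in> Ls" for l
    using is_identifying_codeD(2)[OF X mem_vertices_if_closed_nbhd_eq[OF leaf[OF that]]]
      leaf[OF that] False by auto
  then have "Ls \<subseteq> X \<inter> insert c Ls" by blast
  then show ?thesis using \<open>finite Ls\<close> by (intro card_mono) auto
next
  case True
  obtain m where m: "Ls - {m} \<subseteq> X"
  proof (cases "Ls \<subseteq> X")
    case False
    then obtain m where "m \<in> Ls" "m \<notin> X" by blast
    have "l \<in> X" if "l \<in> Ls" "l \<noteq> m" for l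
    proof (rule ccontr)
      assume "l \<notin> X"
      then have "closed_nbhd V E l \<inter> X = closed_nbhd V E m \<inter> X"
        unfolding leaf[OF \<open>l \<in> Ls\<close>] leaf[OF \<open>m \<in> Ls\<close>] using \<open>m \<notin> X\<close> by blast
      then show False
        using is_identifying_codeD(3)[OF X] \<open>l \<noteq> m\<close>
          mem_vertices_if_closed_nbhd_eq[OF leaf[OF \<open>l \<in> Ls\<close>]]
          mem_vertices_if_closed_nbhd_eq[OF leaf[OF \<open>m \<in> Ls\<close>]] by blast
    qed
    then show ?thesis using that by blast
  qed (use that in blast)
  have "card Ls \<le> Suc (card (Ls - {m}))"
    by (simp add: card_Diff_singleton_if, arith)
  also have "\<dots> = card (insert c (Ls - {m}))"
    using \<open>finite Ls\<close> \<open>c \<notin> Ls\<close> by simp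
  also have "\<dots> \<le> card (X \<inter> insert c Ls)"
    using \<open>finite Ls\<close> m True by (intro card_mono) auto
  finally show ?thesis .
qed

lemma pendant_star_subset_identifying_code:
  assumes X: "is_identifying_code V E X" and s: "s \<in> V" "s \<notin> Ls"
    and sees_c: "closed_nbhd V E s \<inter> X \<subseteq> {c}"
    and leaf: "\<And>l. l \<in> Ls \<Longrightarrow> closed_nbhd V E l = {l, c}"
  shows "insert c Ls \<subseteq> X"
proof -
  have Ns: "closed_nbhd V E s \<inter> X = {c}"
    using sees_c is_identifying_codeD(2)[OF X \<open>s \<in> V\<close>] by blast
  then have "c \<in> X" by blast
  moreover have "l \<in> X" if "l \<in> Ls" for l
  proof (rule ccontr)
    assume "l \<notin> X"
    then have "closed_nbhd V E l \<inter> X = closed_nbhd V E s \<inter> X"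
      unfolding leaf[OF that] Ns using \<open>c \<in> X\<close> by blast
    then show False
      using is_identifying_codeD(3)[OF X mem_vertices_if_closed_nbhd_eq[OF leaf[OF that]] \<open>s \<in> V\<close>]
        \<open>s \<notin> Ls\<close> that by blast
  qed
  ultimately show ?thesis by blast
qed

lemma mem_tverts [simp]:
  "P j \<in> tverts t d \<longleftrightarrow> j < t"
  "S j \<in> tverts t d \<longleftrightarrow> j < t"
  "C j k \<in> tverts t d \<longleftrightarrow> j < t \<and> k < d - 2"
  "L j k l \<in> tverts t d \<longleftrightarrow> j < t \<and> k < d - 2 \<and> l < d - 1"
  by (auto simp: tverts_def)

lemma tadj_simps [simp]:
  "tadj t d (L j k l) y \<longleftrightarrow> j < t \<and> k < d - 2 \<and> l < d - 1 \<and> y = C j k"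
  "tadj t d (S j) y \<longleftrightarrow> j < t \<and> (y = P j \<or> y = C j 0 \<and> 0 < d - 2)"
  "tadj t d (C j k) y \<longleftrightarrow> j < t \<and> k < d - 2 \<and>
     ((\<exists>l < d - 1. y = L j k l) \<or> k = 0 \<and> y = S j \<or> 1 \<le> k \<and> y = P j)"
  "tadj t d (P j) y \<longleftrightarrow> j < t \<and>
     (y = P (Suc j) \<and> Suc j < t \<or> (\<exists>i. j = Suc i \<and> y = P i) \<or> y = S j \<or>
      (\<exists>k. 1 \<le> k \<and> k < d - 2 \<and> y = C j k))"
  by (auto simp: tadj_def tarc_def)

lemma closed_nbhd_L:
  "j < t \<Longrightarrow> k < d - 2 \<Longrightarrow> l < d - 1 \<Longrightarrow>
   closed_nbhd (tverts t d) (tadj t d) (L j k l) = {L j k l, C j k}"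
  by (auto simp: closed_nbhd_def)

lemma closed_nbhd_S:
  "j < t \<Longrightarrow> 3 \<le> d \<Longrightarrow> closed_nbhd (tverts t d) (tadj t d) (S j) = {S j, P j, C j 0}"
  by (auto simp: closed_nbhd_def)

definition star_leaves :: "nat \<Rightarrow> nat \<Rightarrow> nat \<Rightarrow> tvert set" where
  "star_leaves d j k = L j k ` {..<d - 1}"

definition star :: "nat \<Rightarrow> nat \<Rightarrow> nat \<Rightarrow> tvert set" where
  "star d j k = insert (C j k) (star_leaves d j k)"

definition block :: "nat \<Rightarrow> nat \<Rightarrow> tvert set" where
  "block d j = {P j, S j} \<union> (\<Union>k < d - 2. star d j k)"

lemma finite_star_leaves [simp]: "finite (star_leaves d j k)"
  by (simp add: star_leaves_def)

lemma finite_star [simp]: "finite (star d j k)"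
  by (simp add: star_def)

lemma card_star_leaves: "card (star_leaves d j k) = d - 1"
  by (simp add: star_leaves_def card_image inj_on_def)

lemma card_star: "1 \<le> d \<Longrightarrow> card (star d j k) = d"
  by (simp add: star_def star_leaves_def card_image inj_on_def image_iff)

lemma tverts_eq_UN_block: "tverts t d = (\<Union>j < t. block d j)"
  by (auto simp: tverts_def block_def star_def star_leaves_def)

lemma card_block: "2 \<le> d \<Longrightarrow> card (block d j) = 2 + (d - 2) * d"
proof -
  assume "2 \<le> d"
  have "card (\<Union>k < d - 2. star d j k) = (\<Sum>k < d - 2. card (star d j k))"
    by (intro card_UN_disjoint) (auto simp: star_def star_leaves_def)
  also have "\<dots> = (d - 2) * d"
    using \<open>2 \<le> d\<close> by (simp add: card_star)
  finally show ?thesis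
    unfolding block_def by (subst card_Un_disjoint) (auto simp: star_def star_leaves_def)
qed

lemma card_tverts: "2 \<le> d \<Longrightarrow> card (tverts t d) = t * (2 + (d - 2) * d)"
proof -
  assume "2 \<le> d"
  have "card (\<Union>j < t. block d j) = (\<Sum>j < t. card (block d j))"
    by (intro card_UN_disjoint) (auto simp: block_def star_def star_leaves_def)
  then show ?thesis
    using \<open>2 \<le> d\<close> by (simp add: tverts_eq_UN_block card_block)
qed

section \<open>The lower bound\<close>

lemma card_star_inter_identifying_code:
  assumes X: "is_identifying_code (tverts t d) (tadj t d) X" and "j < t" "k < d - 2"
  shows "d - 1 \<le> card (X \<inter> star d j k)"
proof -
  have "card (star_leaves d j k) \<le> card (X \<inter> star d j k)"
    unfolding star_def using assms
    by (intro card_pendant_leaves_le_identifying_code[OF X]) (auto simp: star_leaves_def closed_nbhd_L)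
  then show ?thesis by (simp add: card_star_leaves)
qed

lemma card_root_inter_identifying_code:
  assumes X: "is_identifying_code (tverts t d) (tadj t d) X" and j: "j < t" and d: "3 \<le> d"
  shows "d \<le> card (X \<inter> {P j, S j}) + card (X \<inter> star d j 0)"
proof (cases "X \<inter> {P j, S j} = {}")
  case True
  have "star d j 0 \<subseteq> X"
    unfolding star_def using True j d
    by (intro pendant_star_subset_identifying_code[OF X, of "S j"])
      (auto simp: star_leaves_def closed_nbhd_S closed_nbhd_L)
  then show ?thesis
    using d by (simp add: Int_absorb1 card_star)
next
  case False
  then have "1 \<le> card (X \<inter> {P j, S j})"
    by (simp add: Suc_le_eq card_gt_0_iff)
  then show ?thesis
    using card_star_inter_identifying_code[OF X j, of 0] d by linarith
qed

lemma card_block_inter_identifying_code: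
  assumes X: "is_identifying_code (tverts t d) (tadj t d) X" and j: "j < t" and d: "4 \<le> d"
  shows "1 + (d - 2) * (d - 1) \<le> card (X \<inter> block d j)"
proof -
  let ?f = "\<lambda>k. card (X \<inter> star d j k)"
  have d2: "d - 2 = Suc (d - 3)"
    using d by simp
  have "card (X \<inter> block d j) = card (X \<inter> {P j, S j}) + card (\<Union>k < d - 2. X \<inter> star d j k)"
    unfolding block_def Int_Un_distrib Int_UN_distrib
    by (subst card_Un_disjoint) (auto simp: star_def star_leaves_def)
  also have "card (\<Union>k < d - 2. X \<inter> star d j k) = (\<Sum>k < d - 2. ?f k)"
    by (intro card_UN_disjoint) (auto simp: star_def star_leaves_def)
  also have "\<dots> = ?f 0 + (\<Sum>k < d - 3. ?f (Suc k))"
    unfolding d2 by (rule sum.lessThan_Suc_shift)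
  finally have "card (X \<inter> block d j) = (card (X \<inter> {P j, S j}) + ?f 0) + (\<Sum>k < d - 3. ?f (Suc k))"
    by simp
  moreover have "(d - 3) * (d - 1) \<le> (\<Sum>k < d - 3. ?f (Suc k))"
    using sum_bounded_below[of "{..<d - 3}" "d - 1" "\<lambda>k. ?f (Suc k)"]
      card_star_inter_identifying_code[OF X j] d2 by simp
  moreover have "(d - 2) * (d - 1) = (d - 1) + (d - 3) * (d - 1)"
    unfolding d2 by simp
  ultimately show ?thesis
    using card_root_inter_identifying_code[OF X j] d by linarith
qed

lemma card_identifying_code_ge:
  assumes X: "is_identifying_code (tverts t d) (tadj t d) X" and d: "4 \<le> d"
  shows "t * (1 + (d - 2) * (d - 1)) \<le> card X"
proof -
  have "X = (\<Union>j < t. X \<inter> block d j)"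
    using is_identifying_codeD(1)[OF X] by (auto simp: tverts_eq_UN_block)
  also have "card \<dots> = (\<Sum>j < t. card (X \<inter> block d j))"
    by (intro card_UN_disjoint) (auto simp: block_def star_def star_leaves_def)
  finally have "card X = (\<Sum>j < t. card (X \<inter> block d j))" .
  then show ?thesis
    using sum_bounded_below[of "{..<t}" "1 + (d - 2) * (d - 1)" "\<lambda>j. card (X \<inter> block d j)"]
      card_block_inter_identifying_code[OF X _ d] by simp
qed

section \<open>The upper bound\<close>

definition tcode :: "nat \<Rightarrow> nat \<Rightarrow> tvert set" where
  "tcode t d = tverts t d - (P ` {..<t} \<union> (\<lambda>(j, k). L j k 0) ` ({..<t} \<times> {..<d - 2}))"

lemma mem_tcode [simp]:
  "P j \<notin> tcode t d"
  "S j \<in> tcode t d \<longleftrightarrow> j < t"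
  "C j k \<in> tcode t d \<longleftrightarrow> j < t \<and> k < d - 2"
  "L j k l \<in> tcode t d \<longleftrightarrow> j < t \<and> k < d - 2 \<and> 0 < l \<and> l < d - 1"
  by (auto simp: tcode_def)

text \<open>Landmarks are candidate separators: checking them alone reduces the separation property
  of \<open>tcode\<close> to finitely many membership tests per pair of vertex kinds.\<close>

fun landmarks :: "tvert \<Rightarrow> tvert set" where
  "landmarks (P j) = {S j, C j 1}"
| "landmarks (S j) = {S j, C j 0}"
| "landmarks (C j k) = {C j k, L j k 1, L j k 2}"
| "landmarks (L j k l) = {C j k, L j k l}"

lemma tcode_separated_by_landmarks:
  assumes "4 \<le> d" "u \<in> tverts t d" "v \<in> tverts t d" "u \<noteq> v"
  shows "\<exists>w \<in> landmarks u \<union> landmarks v.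
           w \<in> closed_nbhd (tverts t d) (tadj t d) u \<inter> tcode t d \<longleftrightarrow>
           w \<notin> closed_nbhd (tverts t d) (tadj t d) v \<inter> tcode t d"
proof -
  have "Suc 0 < d - 2" "Suc 0 < d - 1" "2 < d - 1"
    using assms(1) by simp_all
  then show ?thesis
    using assms(2-) by (cases u; cases v; simp add: closed_nbhd_def; auto dest: spec[of _ 1])
qed

lemma tcode_is_identifying_code:
  assumes "4 \<le> d"
  shows "is_identifying_code (tverts t d) (tadj t d) (tcode t d)"
  unfolding is_identifying_code_def
proof (intro conjI ballI impI)
  show "tcode t d \<subseteq> tverts t d"
    by (auto simp: tcode_def)
next
  fix v assume v: "v \<in> tverts t d"
  have "\<exists>w. w \<in> closed_nbhd (tverts t d) (tadj t d) v \<inter> tcode t d"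
  proof (cases v)
    case (P j)
    with v show ?thesis by (intro exI[of _ "S j"]) (simp add: closed_nbhd_def)
  next
    case (S j)
    with v show ?thesis by (intro exI[of _ "S j"]) (simp add: closed_nbhd_def)
  next
    case (C j k)
    with v show ?thesis by (intro exI[of _ "C j k"]) (simp add: closed_nbhd_def)
  next
    case (L j k l)
    with v show ?thesis by (intro exI[of _ "C j k"]) (simp add: closed_nbhd_def)
  qed
  then show "closed_nbhd (tverts t d) (tadj t d) v \<inter> tcode t d \<noteq> {}"
    by blast
next
  fix u v assume "u \<in> tverts t d" "v \<in> tverts t d" "u \<noteq> v"
  show "closed_nbhd (tverts t d) (tadj t d) u \<inter> tcode t d \<noteq>
        closed_nbhd (tverts t d) (tadj t d) v \<inter> tcode t d"
  proof
    assume same: "closed_nbhd (tverts t d) (tadj t d) u \<inter> tcode t d =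
                  closed_nbhd (tverts t d) (tadj t d) v \<inter> tcode t d"
    show False
      using tcode_separated_by_landmarks[OF assms \<open>u \<in> tverts t d\<close> \<open>v \<in> tverts t d\<close> \<open>u \<noteq> v\<close>]
      unfolding same by blast
  qed
qed

lemma card_tcode:
  assumes "2 \<le> d"
  shows "card (tcode t d) = t * (1 + (d - 2) * (d - 1))"
proof -
  let ?B = "P ` {..<t} \<union> (\<lambda>(j, k). L j k 0) ` ({..<t} \<times> {..<d - 2})"
  have "card ?B = t + t * (d - 2)"
    by (subst card_Un_disjoint) (auto simp: card_image inj_on_def)
  moreover have "?B \<subseteq> tverts t d"
    using assms by auto
  then have "card (tcode t d) = card (tverts t d) - card ?B"
    unfolding tcode_def by (intro card_Diff_subset) auto
  moreover obtain e where "d = e + 2"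
    using assms le_Suc_ex by (metis add.commute)
  ultimately show ?thesis
    using card_tverts[OF assms] by (simp add: algebra_simps)
qed

lemma id_code_number_tree:
  assumes "4 \<le> d"
  shows "id_code_number (tverts t d) (tadj t d) = t * (1 + (d - 2) * (d - 1))"
  using tcode_is_identifying_code[OF assms] card_tcode card_identifying_code_ge[OF _ assms] assms
  by (intro id_code_number_eqI) auto

lemma id_ratio_eq:
  fixes D :: real
  assumes "D \<noteq> 2"
  shows "(D - 1 + 1 / (D - 2)) / (D + 2 / (D - 2)) = ((D - 2) * (D - 1) + 1) / ((D - 2) * D + 2)"
proof -
  have nz: "D - 2 \<noteq> 0"
    using assms by simp
  have "(D - 1 + 1 / (D - 2)) * (D - 2) = (D - 2) * (D - 1) + 1"
       "(D + 2 / (D - 2)) * (D - 2) = (D - 2) * D + 2"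
    using nz by (simp_all add: field_simps)
  then show ?thesis
    using mult_divide_mult_cancel_right[OF nz, of "D - 1 + 1 / (D - 2)" "D + 2 / (D - 2)"] by simp
qed

lemma id_ratio_denom_pos: "0 < (D - 2) * D + (2 :: real)"
  using sum_power2_gt_zero_iff[of "D - 1" 1] by (simp add: power2_eq_square algebra_simps)

lemma id_ratio_mult_gt:
  fixes D n :: real
  assumes "D \<noteq> 0" "0 < n"
  shows "(D - 1) / D * n - n / D^2 < ((D - 2) * (D - 1) + 1) / ((D - 2) * D + 2) * n"
proof -
  have "((D - 2) * (D - 1) + 1) * D^2 = (D^2 - D - 1) * ((D - 2) * D + 2) + 2"
    by (simp add: power2_eq_square algebra_simps)
  then have "(D^2 - D - 1) / D^2 < ((D - 2) * (D - 1) + 1) / ((D - 2) * D + 2)"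
    using id_ratio_denom_pos[of D] assms(1) by (simp add: divide_less_eq less_divide_eq)
  then have "(D^2 - D - 1) / D^2 * n < ((D - 2) * (D - 1) + 1) / ((D - 2) * D + 2) * n"
    using assms(2) by (rule mult_strict_right_mono)
  moreover have "(D - 1) / D * n - n / D^2 = (D^2 - D - 1) / D^2 * n"
    using assms(1) by (simp add: field_simps power2_eq_square)
  ultimately show ?thesis
    by simp
qed

theorem mainTheorem18:
  fixes t \<Delta> :: nat
  assumes "t \<ge> 3" and "\<Delta> \<ge> 4"
  shows "real (id_code_number (tverts t \<Delta>) (tadj t \<Delta>)) =
           ((real \<Delta> - 1 + 1 / (real \<Delta> - 2)) / (real \<Delta> + 2 / (real \<Delta> - 2)))
             * real (card (tverts t \<Delta>))
       \<and> ((real \<Delta> - 1 + 1 / (real \<Delta> - 2)) / (real \<Delta> + 2 / (real \<Delta> - 2)))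
             * real (card (tverts t \<Delta>))
         > ((real \<Delta> - 1) / real \<Delta>) * real (card (tverts t \<Delta>))
           - real (card (tverts t \<Delta>)) / (real \<Delta>)^2"
proof -
  define D where "D = real \<Delta>"
  have casts: "real (\<Delta> - 2) = D - 2" "real (\<Delta> - 1) = D - 1"
    using assms(2) by (simp_all add: D_def of_nat_diff)
  have gamma: "real (id_code_number (tverts t \<Delta>) (tadj t \<Delta>)) = real t * ((D - 2) * (D - 1) + 1)"
    using id_code_number_tree[OF assms(2)] casts by (simp add: distrib_left)
  have order: "real (card (tverts t \<Delta>)) = real t * ((D - 2) * D + 2)"
    using card_tverts[of \<Delta> t] assms(2) casts by (simp add: D_def distrib_left)
  have ratio: "(D - 1 + 1 / (D - 2)) / (D + 2 / (D - 2)) = ((D - 2) * (D - 1) + 1) / ((D - 2) * D + 2)"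
    using assms(2) by (intro id_ratio_eq) (simp add: D_def)
  have Q: "0 < (D - 2) * D + 2"
    by (rule id_ratio_denom_pos)
  have "real (id_code_number (tverts t \<Delta>) (tadj t \<Delta>)) =
        ((D - 2) * (D - 1) + 1) / ((D - 2) * D + 2) * real (card (tverts t \<Delta>))"
    unfolding gamma order using Q by simp
  moreover have "(D - 1) / D * real (card (tverts t \<Delta>)) - real (card (tverts t \<Delta>)) / D^2
      < ((D - 2) * (D - 1) + 1) / ((D - 2) * D + 2) * real (card (tverts t \<Delta>))"
    using assms Q by (intro id_ratio_mult_gt) (simp_all add: D_def order)
  ultimately show ?thesis
    unfolding D_def[symmetric] ratio by blast
qed

end
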